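(* Let $A,B$ be RLE strings of encoded length $n$, let $\tilde d$ be a positive integer, and let $(i_A,i_B)\in[n]\times[n]$. Then $(i_A,i_B)$ is a $\tilde d$-witness pair if and only if there exists a common generalized substring $s$ of $A$ and $B$ with $|\tilde s|=\tilde d$ and $|s|<n^{1/3}$, having an occurrence in $\tilde A$ starting within the run $A[i_A]$ and an occurrence in $\tilde B$ starting within the run $B[i_B]$, such that the occurrence in the string whose run is shorter (in $\tilde A$ if $R(A[i_A])\le R(B[i_B])$, in $\tilde B$ if $R(B[i_B])\le R(A[i_A])$) starts at the first character of that run.
   Context: A string $\tilde s$ has run-length encoding (RLE) $s=s[1]\cdots s[m]$, the sequence of its maximal runs of identical characters; $|s|=m$ is the encoded length, $|\tilde s|$ the decoded length; $C(s[i])$ and $R(s[i])$ are the character and length of run $s[i]$. An RLE string $t$ is a generalized substring of $s$ if $\tilde t$ is a substring of $\tilde s$. A pair $(i_A,i_B)\in[n]\times[n]$ is a $\tilde d$-witness pair iff there is a common generalized substring $s$ of $A$ and $B$ with $|\tilde s|\ge\tilde d$ and $|s|<n^{1/3}$ such that an occurrence of $\tilde s$ in $\tilde A$ has its first character in the run $A[i_A]$ and an occurrence in $\tilde B$ has its first character in the run $B[i_B]$. *)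

theory Defs
  imports Complex_Main
begin

text \<open>An RLE string is a list of runs (character, run length). Runs are indexed 1..|s| in the paper,
  i.e. run s[i] is the list element s ! (i - 1).\<close>

type_synonym 'a rle = "('a \<times> nat) list"

definition rle_wf :: "'a rle \<Rightarrow> bool" where
  "rle_wf s \<longleftrightarrow> (\<forall>r \<in> set s. snd r > 0) \<and>
     (\<forall>i. Suc i < length s \<longrightarrow> fst (s ! i) \<noteq> fst (s ! Suc i))"

definition decode :: "'a rle \<Rightarrow> 'a list" where
  "decode s = concat (map (\<lambda>(c, l). replicate l c) s)"

text \<open>Character C(s[i]) and length R(s[i]) of run i (1-based).\<close>
definition run_char :: "'a rle \<Rightarrow> nat \<Rightarrow> 'a" where
  "run_char s i = fst (s ! (i - 1))"

definition run_len :: "'a rle \<Rightarrow> nat \<Rightarrow> nat" where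
  "run_len s i = snd (s ! (i - 1))"

text \<open>0-based position in the decoded string of the first character of run i (1-based).\<close>
definition run_start :: "'a rle \<Rightarrow> nat \<Rightarrow> nat" where
  "run_start s i = sum_list (map snd (take (i - 1) s))"

definition occurs_at :: "'a list \<Rightarrow> 'a list \<Rightarrow> nat \<Rightarrow> bool" where
  "occurs_at w x p \<longleftrightarrow> p + length x \<le> length w \<and> take (length x) (drop p w) = x"

definition in_run :: "'a rle \<Rightarrow> nat \<Rightarrow> nat \<Rightarrow> bool" where
  "in_run s i p \<longleftrightarrow> run_start s i \<le> p \<and> p < run_start s i + run_len s i"

definition gen_substring :: "'a rle \<Rightarrow> 'a rle \<Rightarrow> bool" where
  "gen_substring t s \<longleftrightarrow> (\<exists>p. occurs_at (decode s) (decode t) p)"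

definition witness_pair :: "'a rle \<Rightarrow> 'a rle \<Rightarrow> nat \<Rightarrow> nat \<Rightarrow> nat \<Rightarrow> nat \<Rightarrow> bool" where
  "witness_pair A B n d iA iB \<longleftrightarrow>
     (\<exists>s. rle_wf s \<and> gen_substring s A \<and> gen_substring s B \<and>
          length (decode s) \<ge> d \<and> real (length s) < real n powr (1/3) \<and>
          (\<exists>p. occurs_at (decode A) (decode s) p \<and> in_run A iA p) \<and>
          (\<exists>q. occurs_at (decode B) (decode s) q \<and> in_run B iB q))"

end

theory Submission
  imports Defs
begin

text \<open>Truncating a witness to \<open>d\<close> characters keeps it well-formed and does not add runs,
  so only the alignment matters. An occurrence of \<open>s = (c, L) # rest\<close> starting at offset
  \<open>a\<close> in a run of length \<open>R\<close> has its first run inside that run, and if \<open>rest \<noteq> []\<close> the first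
  run must reach exactly to the end of that run: \<open>L = R - a\<close>. Since the same holds in \<open>B\<close>, the
  shorter of the two runs carries the smaller offset, and prepending \<open>min a b\<close> copies of \<open>c\<close>
  moves that occurrence to the first character of its run while both occurrences stay inside
  their runs. If \<open>s\<close> is a single run \<open>c\<^sup>L\<close>, then \<open>c\<^sup>d\<close> occurs at the start of both runs.\<close>

lemma occurs_at_iff_drop:
  "occurs_at W x p \<longleftrightarrow> p \<le> length W \<and> (\<exists>z. drop p W = x @ z)"
proof
  assume "occurs_at W x p"
  then show "p \<le> length W \<and> (\<exists>z. drop p W = x @ z)"
    unfolding occurs_at_def by (metis append_take_drop_id le_add1 order_trans)
next
  assume "p \<le> length W \<and> (\<exists>z. drop p W = x @ z)"
  then obtain z where "p \<le> length W" "drop p W = x @ z" by blast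
  moreover from this have "length W - p = length x + length z"
    by (metis length_append length_drop)
  ultimately show "occurs_at W x p" unfolding occurs_at_def by simp
qed

lemma occurs_at_take: "occurs_at W x p \<Longrightarrow> occurs_at W (take k x) p"
proof -
  assume "occurs_at W x p"
  then have "p + length x \<le> length W" "take (length x) (drop p W) = x"
    unfolding occurs_at_def by simp_all
  moreover from this have "take k x = take (length (take k x)) (drop p W)"
    by (metis length_take min.commute take_take)
  ultimately show ?thesis unfolding occurs_at_def by simp
qed

lemma decode_Nil [simp]: "decode [] = []"
  by (simp add: decode_def)

lemma decode_Cons [simp]: "decode ((c, l) # s) = replicate l c @ decode s"
  by (simp add: decode_def)

lemma decode_append [simp]: "decode (s @ t) = decode s @ decode t"
  by (simp add: decode_def)

lemma length_decode: "length (decode s) = sum_list (map snd s)"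
  by (induction s) auto

lemma rle_wf_Nil [simp]: "rle_wf []"
  by (simp add: rle_wf_def)

lemma rle_wf_Cons:
  "rle_wf (r # s) \<longleftrightarrow> snd r > 0 \<and> rle_wf s \<and> (s \<noteq> [] \<longrightarrow> fst r \<noteq> fst (hd s))"
proof -
  have "(\<forall>i. Suc i < length (r # s) \<longrightarrow> fst ((r # s) ! i) \<noteq> fst ((r # s) ! Suc i)) \<longleftrightarrow>
        (s \<noteq> [] \<longrightarrow> fst r \<noteq> fst (hd s)) \<and>
        (\<forall>i. Suc i < length s \<longrightarrow> fst (s ! i) \<noteq> fst (s ! Suc i))"
    by (cases s) (auto simp: All_less_Suc2 hd_conv_nth nth_Cons split: nat.split)
  then show ?thesis unfolding rle_wf_def by auto
qed

lemma rle_wf_drop: "rle_wf s \<Longrightarrow> rle_wf (drop k s)"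
proof (induction s arbitrary: k)
  case (Cons r s)
  then show ?case by (cases k) (auto simp: rle_wf_Cons)
qed simp

lemma hd_decode: "rle_wf s \<Longrightarrow> s \<noteq> [] \<Longrightarrow> decode s \<noteq> [] \<and> hd (decode s) = fst (hd s)"
  by (cases s) (auto simp: rle_wf_Cons)

fun rle_take :: "nat \<Rightarrow> 'a rle \<Rightarrow> 'a rle" where
  "rle_take k [] = []"
| "rle_take k ((c, l) # s) =
     (if k = 0 then [] else if k \<le> l then [(c, k)] else (c, l) # rle_take (k - l) s)"

lemma decode_rle_take: "decode (rle_take k s) = take k (decode s)"
  by (induction k s rule: rle_take.induct) auto

lemma length_rle_take: "length (rle_take k s) \<le> length s"
  by (induction k s rule: rle_take.induct) auto

lemma rle_wf_rle_take: "rle_wf s \<Longrightarrow> rle_wf (rle_take k s)"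
proof (induction k s rule: rle_take.induct)
  case (2 k c l s)
  have "rle_take k' s \<noteq> [] \<Longrightarrow> fst (hd (rle_take k' s)) = fst (hd s)" for k'
    by (induction k' s rule: rle_take.induct) auto
  with 2 show ?case by (auto simp: rle_wf_Cons)
qed simp

text \<open>The hypotheses on \<open>V\<close> and \<open>Y\<close> say that both sides start with a maximal block
  of one character.\<close>
lemma replicate_block_fit:
  assumes eq: "replicate m c @ V = replicate L c' @ Y @ Z"
    and "0 < m" "0 < L"
    and V: "V = [] \<or> hd V \<noteq> c" and Y: "Y = [] \<or> hd Y \<noteq> c'"
  shows "c' = c \<and> L \<le> m \<and> (Y \<noteq> [] \<longrightarrow> L = m)"
proof -
  have "(replicate m c @ V) ! 0 = (replicate L c' @ Y @ Z) ! 0" using eq by simp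
  then have c: "c' = c" using \<open>0 < m\<close> \<open>0 < L\<close> by (simp add: nth_append)
  have le: "L \<le> m"
  proof (rule ccontr)
    assume "\<not> L \<le> m"
    then have "replicate L c = replicate m c @ replicate (L - m) c"
      by (simp add: replicate_add[symmetric])
    then have "V = replicate (L - m) c @ Y @ Z"
      using eq c by simp
    moreover have "0 < L - m" using \<open>\<not> L \<le> m\<close> by simp
    ultimately show False using V by (cases "L - m") simp_all
  qed
  moreover have "L = m" if "Y \<noteq> []"
  proof (rule ccontr)
    assume "L \<noteq> m"
    with le have "replicate m c = replicate L c @ replicate (m - L) c"
      by (simp add: replicate_add[symmetric])
    then have "replicate (m - L) c @ V = Y @ Z"
      using eq c by simp
    moreover have "0 < m - L" using \<open>L \<noteq> m\<close> le by simp
    ultimately have "hd (Y @ Z) = c" by (metis hd_append2 hd_replicate replicate_empty less_not_refl)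
    then have "hd Y = c" using \<open>Y \<noteq> []\<close> by simp
    with Y c that show False by simp
  qed
  ultimately show ?thesis using c by blast
qed

lemma decode_split_run:
  assumes "i \<in> {1..length A}"
  shows "decode A = decode (take (i - 1) A) @ replicate (run_len A i) (run_char A i) @
                    decode (drop i A)"
    and "length (decode (take (i - 1) A)) = run_start A i"
proof -
  have "A = take (i - 1) A @ A ! (i - 1) # drop i A"
    using assms id_take_nth_drop[of "i - 1" A] by auto
  then show "decode A = decode (take (i - 1) A) @ replicate (run_len A i) (run_char A i) @
                        decode (drop i A)"
    unfolding run_len_def run_char_def by (metis decode_Cons decode_append prod.collapse)
  show "length (decode (take (i - 1) A)) = run_start A i"
    unfolding run_start_def length_decode ..
qed

lemma decode_after_run:
  assumes "rle_wf A" "i \<in> {1..length A}"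
  shows "decode (drop i A) = [] \<or> hd (decode (drop i A)) \<noteq> run_char A i"
proof (cases "i < length A")
  case True
  obtain j where j: "i = Suc j" using assms(2) by (cases i) auto
  have "drop i A \<noteq> []" "hd (drop i A) = A ! i"
    using True by (simp_all add: hd_drop_conv_nth)
  moreover have "fst (A ! i) \<noteq> run_char A i"
    using assms(1) True unfolding rle_wf_def run_char_def j by (auto dest: spec[of _ j])
  ultimately show ?thesis
    using hd_decode[OF rle_wf_drop[OF assms(1)]] by metis
qed simp

lemma first_run_within_run:
  assumes A: "rle_wf A" "i \<in> {1..length A}"
    and s: "rle_wf ((c, L) # rest)"
    and occ: "occurs_at (decode A) (decode ((c, L) # rest)) p" and p: "in_run A i p"
  shows "c = run_char A i" and "p + L \<le> run_start A i + run_len A i"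
    and "rest \<noteq> [] \<Longrightarrow> p + L = run_start A i + run_len A i"
proof -
  define U where "U = decode (take (i - 1) A)"
  define a where "a = p - run_start A i"
  have split: "decode A = U @ replicate (run_len A i) (run_char A i) @ decode (drop i A)"
    and U: "length U = run_start A i"
    using decode_split_run[OF A(2)] unfolding U_def by blast+
  have pa: "p = length U + a" "a < run_len A i"
    using p U unfolding in_run_def a_def by auto
  obtain z where "drop p (decode A) = decode ((c, L) # rest) @ z"
    using occ occurs_at_iff_drop by blast
  then have eq: "replicate (run_len A i - a) (run_char A i) @ decode (drop i A) =
                 replicate L c @ decode rest @ z"
    using split pa by simp
  have L: "0 < L" and rest: "rle_wf rest" "rest \<noteq> [] \<Longrightarrow> fst (hd rest) \<noteq> c"
    using s by (auto simp: rle_wf_Cons)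
  have rest_nonempty: "rest \<noteq> [] \<Longrightarrow> decode rest \<noteq> []"
    using hd_decode[OF rest(1)] by blast
  have "decode rest = [] \<or> hd (decode rest) \<noteq> c"
    using hd_decode[OF rest(1)] rest(2) by (cases "rest = []") auto
  then have "c = run_char A i \<and> L \<le> run_len A i - a \<and>
                (decode rest \<noteq> [] \<longrightarrow> L = run_len A i - a)"
    using replicate_block_fit[OF eq _ L decode_after_run[OF A]] pa(2) by simp
  then show "c = run_char A i" and "p + L \<le> run_start A i + run_len A i"
    and "rest \<noteq> [] \<Longrightarrow> p + L = run_start A i + run_len A i"
    using pa U rest_nonempty by auto
qed

lemma occurs_at_extend_within_run:
  assumes "i \<in> {1..length A}" and p: "in_run A i p"
    and occ: "occurs_at (decode A) x p" and e: "e \<le> p - run_start A i"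
  shows "occurs_at (decode A) (replicate e (run_char A i) @ x) (p - e)"
proof -
  define U where "U = decode (take (i - 1) A)"
  define a where "a = p - run_start A i"
  have split: "decode A = U @ replicate (run_len A i) (run_char A i) @ decode (drop i A)"
    and U: "length U = run_start A i"
    using decode_split_run[OF assms(1)] unfolding U_def by blast+
  have pa: "p = length U + a" "a < run_len A i"
    using p U unfolding in_run_def a_def by auto
  have "drop (p - e) (decode A) =
        replicate (run_len A i - (a - e)) (run_char A i) @ decode (drop i A)"
    using split pa e a_def by (simp add: add_diff_assoc)
  also have "\<dots> = replicate e (run_char A i) @
                    replicate (run_len A i - a) (run_char A i) @ decode (drop i A)"
  proof -
    have "run_len A i - (a - e) = e + (run_len A i - a)"
      using pa(2) e a_def by simp
    then show ?thesis by (simp add: replicate_add)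
  qed
  also have "replicate (run_len A i - a) (run_char A i) @ decode (drop i A) = drop p (decode A)"
    using split pa by simp
  finally have "drop (p - e) (decode A) = replicate e (run_char A i) @ drop p (decode A)" .
  moreover obtain z where "drop p (decode A) = x @ z" and "p \<le> length (decode A)"
    using occ occurs_at_iff_drop by blast
  ultimately show ?thesis
    using occurs_at_iff_drop by fastforce
qed

lemma replicate_occurs_at_run_start:
  assumes A: "rle_wf A" "i \<in> {1..length A}"
    and "0 < d" "d \<le> L"
    and occ: "occurs_at (decode A) (replicate L c) p" and p: "in_run A i p"
  shows "occurs_at (decode A) (replicate d c) (run_start A i)"
proof -
  have "rle_wf [(c, L)]" and "occurs_at (decode A) (decode [(c, L)]) p"
    using assms by (simp_all add: rle_wf_Cons)
  then have c: "c = run_char A i"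
    using first_run_within_run(1)[OF A] p by blast
  define e where "e = p - run_start A i"
  have "occurs_at (decode A) (replicate e c @ replicate L c) (p - e)"
    using occurs_at_extend_within_run[OF A(2) p occ] c e_def by simp
  then have "occurs_at (decode A) (take d (replicate (e + L) c)) (p - e)"
    using occurs_at_take by (metis replicate_add)
  moreover have "p - e = run_start A i"
    using p unfolding in_run_def e_def by simp
  ultimately show ?thesis
    using \<open>d \<le> L\<close> by (simp add: min_def)
qed

lemma occurrences_extend_to_shorter_run_start:
  assumes A: "rle_wf A" "iA \<in> {1..length A}" and B: "rle_wf B" "iB \<in> {1..length B}"
    and s: "rle_wf ((c, L) # rest)" "rest \<noteq> []"
    and occA: "occurs_at (decode A) (decode ((c, L) # rest)) p" and p: "in_run A iA p"
    and occB: "occurs_at (decode B) (decode ((c, L) # rest)) q" and q: "in_run B iB q"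
  defines "e \<equiv> min (p - run_start A iA) (q - run_start B iB)"
  shows "occurs_at (decode A) (decode ((c, L + e) # rest)) (p - e)" "in_run A iA (p - e)"
    and "occurs_at (decode B) (decode ((c, L + e) # rest)) (q - e)" "in_run B iB (q - e)"
    and "run_len A iA \<le> run_len B iB \<Longrightarrow> p - e = run_start A iA"
    and "run_len B iB \<le> run_len A iA \<Longrightarrow> q - e = run_start B iB"
proof -
  have cA: "c = run_char A iA" and endA: "p + L = run_start A iA + run_len A iA"
    using first_run_within_run[OF A s(1) occA p] s(2) by blast+
  have cB: "c = run_char B iB" and endB: "q + L = run_start B iB + run_len B iB"
    using first_run_within_run[OF B s(1) occB q] s(2) by blast+
  have "replicate (L + e) c = replicate e c @ replicate L c"
    by (metis add.commute replicate_add)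
  then have extend: "decode ((c, L + e) # rest) = replicate e c @ decode ((c, L) # rest)"
    by simp
  show "occurs_at (decode A) (decode ((c, L + e) # rest)) (p - e)"
    using occurs_at_extend_within_run[OF A(2) p occA] cA extend e_def by simp
  show "occurs_at (decode B) (decode ((c, L + e) # rest)) (q - e)"
    using occurs_at_extend_within_run[OF B(2) q occB] cB extend e_def by simp
  show "in_run A iA (p - e)" "in_run B iB (q - e)"
    using p q unfolding in_run_def e_def by auto
  show "run_len A iA \<le> run_len B iB \<Longrightarrow> p - e = run_start A iA"
    and "run_len B iB \<le> run_len A iA \<Longrightarrow> q - e = run_start B iB"
    using p q endA endB unfolding in_run_def e_def by auto
qed

lemma common_occurrence_realign:
  assumes A: "rle_wf A" "iA \<in> {1..length A}" and B: "rle_wf B" "iB \<in> {1..length B}"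
    and s: "rle_wf s" and d: "0 < d" "d \<le> length (decode s)"
    and occA: "occurs_at (decode A) (decode s) p" and p: "in_run A iA p"
    and occB: "occurs_at (decode B) (decode s) q" and q: "in_run B iB q"
  obtains s' p' q' where "rle_wf s'" "length s' \<le> length s" "length (decode s') = d"
    and "occurs_at (decode A) (decode s') p'" "in_run A iA p'"
    and "occurs_at (decode B) (decode s') q'" "in_run B iB q'"
    and "run_len A iA \<le> run_len B iB \<Longrightarrow> p' = run_start A iA"
    and "run_len B iB \<le> run_len A iA \<Longrightarrow> q' = run_start B iB"
proof -
  obtain c L rest where s_eq: "s = (c, L) # rest"
    using d by (cases s) auto
  show thesis
  proof (cases "rest = []")
    case True
    then have "d \<le> L" "occurs_at (decode A) (replicate L c) p"
      "occurs_at (decode B) (replicate L c) q"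
      using d occA occB s_eq by simp_all
    then have "occurs_at (decode A) (decode [(c, d)]) (run_start A iA)"
      and "occurs_at (decode B) (decode [(c, d)]) (run_start B iB)"
      using replicate_occurs_at_run_start A B d p q by simp_all
    moreover have "in_run A iA (run_start A iA)" "in_run B iB (run_start B iB)"
      using p q unfolding in_run_def by simp_all
    moreover have "rle_wf [(c, d)]" "length [(c, d)] \<le> length s"
      using d s_eq by (simp_all add: rle_wf_Cons)
    ultimately show thesis
      using that[of "[(c, d)]"] by simp
  next
    case False
    define e where "e = min (p - run_start A iA) (q - run_start B iB)"
    define s' where "s' = rle_take d ((c, L + e) # rest)"
    have "rle_wf ((c, L + e) # rest)"
      using s s_eq by (simp add: rle_wf_Cons)
    then have "rle_wf s'"
      unfolding s'_def by (rule rle_wf_rle_take)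
    moreover have "length s' \<le> length s"
      using length_rle_take[of d "(c, L + e) # rest"] s_eq unfolding s'_def by simp
    moreover have "length (decode s') = d"
      using d s_eq unfolding s'_def decode_rle_take by simp
    moreover note occurrences_extend_to_shorter_run_start[OF A B s[unfolded s_eq] False
        occA[unfolded s_eq] p occB[unfolded s_eq] q, folded e_def]
    ultimately show thesis
      using that[of s' "p - e" "q - e"] occurs_at_take
      unfolding s'_def decode_rle_take by blast
  qed
qed

theorem proposition1:
  fixes A B :: "'a rle" and n d iA iB :: nat
  assumes "rle_wf A" and "rle_wf B"
    and "length A = n" and "length B = n"
    and "d > 0"
    and "iA \<in> {1..n}" and "iB \<in> {1..n}"
  shows "witness_pair A B n d iA iB \<longleftrightarrow>
    (\<exists>s. rle_wf s \<and> gen_substring s A \<and> gen_substring s B \<and>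
         length (decode s) = d \<and> real (length s) < real n powr (1/3) \<and>
         (\<exists>p q. occurs_at (decode A) (decode s) p \<and> in_run A iA p \<and>
                occurs_at (decode B) (decode s) q \<and> in_run B iB q \<and>
                (run_len A iA \<le> run_len B iB \<longrightarrow> p = run_start A iA) \<and>
                (run_len B iB \<le> run_len A iA \<longrightarrow> q = run_start B iB)))"
    (is "_ \<longleftrightarrow> ?aligned")
proof
  assume "witness_pair A B n d iA iB"
  then obtain s p q where "rle_wf s" "d \<le> length (decode s)"
    and short: "real (length s) < real n powr (1/3)"
    and "occurs_at (decode A) (decode s) p" "in_run A iA p"
    and "occurs_at (decode B) (decode s) q" "in_run B iB q"
    unfolding witness_pair_def by blast
  moreover have "iA \<in> {1..length A}" "iB \<in> {1..length B}"
    using assms by simp_all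
  ultimately obtain s' p' q' where "rle_wf s'" "length s' \<le> length s" "length (decode s') = d"
    and "occurs_at (decode A) (decode s') p'" "in_run A iA p'"
    and "occurs_at (decode B) (decode s') q'" "in_run B iB q'"
    and "run_len A iA \<le> run_len B iB \<Longrightarrow> p' = run_start A iA"
    and "run_len B iB \<le> run_len A iA \<Longrightarrow> q' = run_start B iB"
    using common_occurrence_realign[of A iA B iB s d p q] \<open>rle_wf A\<close> \<open>rle_wf B\<close> \<open>d > 0\<close>
    by blast
  moreover from \<open>length s' \<le> length s\<close> short have "real (length s') < real n powr (1/3)"
    by linarith
  ultimately show ?aligned
    unfolding gen_substring_def by blast
next
  assume ?aligned
  then show "witness_pair A B n d iA iB"
    unfolding witness_pair_def by (metis order_refl)
qed

end
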